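(* Let $(\mathcal G,\Delta,\{V^i,U^i\}_{i=1}^n)$ be a partition exchange economy with cycle bound $\Delta\ge 2$. Then there exists a fractional exchange $y^*\in[0,1]^{\mathcal C_\Delta}$ in $\mathcal G$ with the following property: for every finite set $V^0$ of additional altruistic donors (with any choice of their out-arcs) and every exchange $\mathcal E^*$ in $\mathcal G^{+V^0}$, if $$u_i(\mathcal E^* )\ \ge\ \Big\lfloor \sum_{c\in\mathcal C_\Delta}\gamma^i_c\,y^*_c\Big\rfloor\quad\text{for all } i\in N,$$ then $\mathcal E^*$ belongs to the $V^0$-supplemented core.
   Context: A partition exchange economy $(\mathcal G,\Delta,\{V^i,U^i\}_{i=1}^n)$ consists of: a set of organizations $N=\{1,\dots,n\}$; pairwise disjoint finite sets $V^1,\dots,V^n$ with $V=V^1\cup\dots\cup V^n$; subsets $U^i\subseteq V^i$ (the patient vertices of organization $i$; vertices of $V^i\setminus U^i$ are altruistic donors); a directed compatibility graph $\mathcal G=(V,E)$ without loops (arc $(u,v)$: the donor of $u$ can give to the patient of $v$); and an integer cycle bound $\Delta\ge 2$. $\mathcal C_\Delta$ denotes the set of directed cycles of $\mathcal G$ of length at most $\Delta$. For $W\subseteq V$, an exchange among $W$ is a set of pairwise vertex-disjoint directed cycles of length at most $\Delta$ in the induced subgraph $\mathcal G[W]$. A fractional exchange is a vector $y\in[0,1]^{\mathcal C_\Delta}$ with $\sum_{c\in\mathcal C_\Delta:\,v\in c}y_c\le 1$ for every $v\in V$. For a cycle $c$ and organization $i$, $\gamma^i_c=|U^i\cap c|$.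 The utility of organization $i$ from an exchange $\mathcal E$ is $u_i(\mathcal E)$, the number of vertices of $U^i$ lying on cycles of $\mathcal E$. Additional altruistic donors: given a finite set $V^0$ of new vertices (belonging to no organization), the extended graph $\mathcal G^{+V^0}$ is obtained from $\mathcal G$ by adding the vertices of $V^0$, an arc from every other vertex into each $a\in V^0$, and for each $a\in V^0$ arcs from $a$ to an arbitrarily chosen set of vertices; an exchange in $\mathcal G^{+V^0}$ is a set of vertex-disjoint directed cycles of length at most $\Delta$ in $\mathcal G^{+V^0}$. A nonempty coalition $P\subseteq N$ blocks an exchange $\mathcal E$ (of $\mathcal G$ or $\mathcal G^{+V^0}$) if there is an exchange $\mathcal E'$ among $\bigcup_{i\in P}V^i$ (in $\mathcal G$, so vertices of $V^0$ cannot be used) with $u_i(\mathcal E')>u_i(\mathcal E)$ for all $i\in P$. An exchange $\mathcal E^*$ in $\mathcal G^{+V^0}$ is in the $V^0$-supplemented core if no nonempty coalition $P\subseteq N$ blocks it. *)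

theory Defs
  imports Complex_Main
begin

definition is_cycle :: "('v \<times> 'v) set \<Rightarrow> nat \<Rightarrow> ('v \<times> 'v) set \<Rightarrow> bool" where
  "is_cycle A D c \<longleftrightarrow> (\<exists>xs. xs \<noteq> [] \<and> distinct xs \<and> length xs \<le> D \<and>
      c = {(xs ! j, xs ! ((j + 1) mod length xs)) | j. j < length xs} \<and> c \<subseteq> A)"

definition cycles :: "('v \<times> 'v) set \<Rightarrow> nat \<Rightarrow> ('v \<times> 'v) set set" where
  "cycles A D = {c. is_cycle A D c}"

definition verts :: "('v \<times> 'v) set \<Rightarrow> 'v set" where
  "verts c = fst ` c"

definition is_exchange :: "('v \<times> 'v) set \<Rightarrow> 'v set \<Rightarrow> nat \<Rightarrow> ('v \<times> 'v) set set \<Rightarrow> bool" where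
  "is_exchange A W D X \<longleftrightarrow> X \<subseteq> cycles (A \<inter> (W \<times> W)) D \<and>
      (\<forall>c\<in>X. \<forall>c'\<in>X. c \<noteq> c' \<longrightarrow> verts c \<inter> verts c' = {})"

definition fractional_exchange :: "('v \<times> 'v) set \<Rightarrow> 'v set \<Rightarrow> nat \<Rightarrow> (('v \<times> 'v) set \<Rightarrow> real) \<Rightarrow> bool" where
  "fractional_exchange A V D y \<longleftrightarrow> (\<forall>c\<in>cycles A D. 0 \<le> y c \<and> y c \<le> 1) \<and>
      (\<forall>v\<in>V. (\<Sum>c\<in>{c\<in>cycles A D. v \<in> verts c}. y c) \<le> 1)"

definition gamma :: "'v set \<Rightarrow> ('v \<times> 'v) set \<Rightarrow> nat" where
  "gamma U c = card (U \<inter> verts c)"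

definition util :: "'v set \<Rightarrow> ('v \<times> 'v) set set \<Rightarrow> nat" where
  "util U X = card (U \<inter> (\<Union>c\<in>X. verts c))"

definition extended_graph :: "('v \<times> 'v) set \<Rightarrow> 'v set \<Rightarrow> 'v set \<Rightarrow> ('v \<times> 'v) set \<Rightarrow> bool" where
  "extended_graph E V V0 E' \<longleftrightarrow>
     E' \<subseteq> (V \<union> V0) \<times> (V \<union> V0) \<and> (\<forall>v. (v, v) \<notin> E') \<and>
     E' \<inter> (V \<times> V) = E \<and>
     (\<forall>a\<in>V0. \<forall>u\<in>V \<union> V0. u \<noteq> a \<longrightarrow> (u, a) \<in> E')"

definition blocks :: "('v \<times> 'v) set \<Rightarrow> (nat \<Rightarrow> 'v set) \<Rightarrow> (nat \<Rightarrow> 'v set) \<Rightarrow> nat \<Rightarrow> nat set \<Rightarrow> ('v \<times> 'v) set set \<Rightarrow> bool" where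
  "blocks E Vs Us D P X \<longleftrightarrow> P \<noteq> {} \<and>
     (\<exists>X'. is_exchange E (\<Union>i\<in>P. Vs i) D X' \<and> (\<forall>i\<in>P. util (Us i) X' > util (Us i) X))"

definition in_supp_core :: "('v \<times> 'v) set \<Rightarrow> (nat \<Rightarrow> 'v set) \<Rightarrow> (nat \<Rightarrow> 'v set) \<Rightarrow> nat \<Rightarrow> nat \<Rightarrow> ('v \<times> 'v) set set \<Rightarrow> bool" where
  "in_supp_core E Vs Us n D X \<longleftrightarrow> \<not> (\<exists>P \<subseteq> {1..n}. blocks E Vs Us D P X)"

end

theory Submission
  imports Defs "HOL-Analysis.Analysis"
begin

text \<open>
  Call a pair \<open>(P, X')\<close> of a nonempty coalition and an exchange among its vertices a block.
  A form of Scarf's lemma gives weights \<open>\<mu> \<ge> 0\<close> on the blocks that are balanced (for every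
  organisation the blocks containing it weigh 1 in total) and such that every block \<open>(P, X')\<close>
  is weakly dominated: some \<open>i \<in> P\<close> does at least as well as in \<open>X'\<close> in every block of the
  support of \<open>\<mu>\<close> that contains \<open>i\<close>. Let \<open>y c\<close> be the weight of the blocks using the cycle
  \<open>c\<close>. A vertex of \<open>V\<^sup>i\<close> lies on at most one cycle of a block, and only in blocks containing
  \<open>i\<close>, so \<open>y\<close> is a fractional exchange; and \<open>\<Sum>\<^sub>c \<gamma>\<^sup>i\<^sub>c y\<^sub>c\<close> is the \<open>\<mu>\<close>-weighted
  sum of the utilities of \<open>i\<close> in its blocks, hence at least \<open>u\<^sub>i(X')\<close> whenever \<open>i\<close> is the
  dominated member of \<open>(P, X')\<close>. So \<open>X'\<close> cannot give \<open>i\<close> more than the floor of this sum,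
  and no coalition blocks an exchange meeting the floor bounds, whatever the altruistic donors.

  Scarf's lemma follows from Brouwer's fixed point theorem for a Nash-type map on the
  simplex, and Brouwer's theorem in a dimension that is a variable follows from Kuhn's
  combinatorial lemma.
\<close>

section \<open>Brouwer's fixed point theorem in variable dimension\<close>

lemma tendsto_fun_iff:
  fixes f :: "'a \<Rightarrow> 'b \<Rightarrow> 'c::topological_space"
  shows "(f \<longlongrightarrow> l) F \<longleftrightarrow> (\<forall>i. ((\<lambda>x. f x i) \<longlongrightarrow> l i) F)"
  using limitin_componentwise[of "\<lambda>_. euclidean" UNIV f l F]
  by (simp add: euclidean_product_topology)

lemma continuous_on_coordinate [continuous_intros]:
  "continuous_on S (\<lambda>x :: 'a \<Rightarrow> 'b::topological_space. x i)"
  by (rule continuous_on_subset[OF continuous_on_product_coordinates]) simp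

text \<open>
  The library's Brouwer theorem lives on a Euclidean type of fixed dimension, whereas the
  dimension here is a term; so the cube is a subset of \<open>nat \<Rightarrow> real\<close> with the product
  topology, its coordinates beyond \<open>m\<close> fixed to 0 to make it compact.
\<close>

definition unit_cube :: "nat \<Rightarrow> (nat \<Rightarrow> real) set" where
  "unit_cube m = (\<Pi>\<^sub>E i\<in>UNIV. if i < m then {0..1} else {0})"

lemma mem_unit_cube:
  "x \<in> unit_cube m \<longleftrightarrow> (\<forall>i. if i < m then 0 \<le> x i \<and> x i \<le> 1 else x i = 0)"
  by (simp add: unit_cube_def PiE_UNIV_domain Pi_iff if_distrib)

lemma compact_unit_cube: "compact (unit_cube m)"
  using compactin_PiE[of "\<lambda>_. euclidean" UNIV "\<lambda>i. if i < m then {0..1} else {0::real}"]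
  by (simp add: unit_cube_def euclidean_product_topology)

definition approx_fixpoint :: "((nat \<Rightarrow> real) \<Rightarrow> nat \<Rightarrow> real) \<Rightarrow> nat \<Rightarrow> real \<Rightarrow> (nat \<Rightarrow> real) \<Rightarrow> bool" where
  "approx_fixpoint F m e z \<longleftrightarrow> z \<in> unit_cube m \<and>
     (\<forall>i<m. \<exists>A\<in>unit_cube m. \<exists>B\<in>unit_cube m.
        (\<forall>j. \<bar>A j - z j\<bar> \<le> e \<and> \<bar>B j - z j\<bar> \<le> e) \<and> A i \<le> F A i \<and> F B i \<le> B i)"

lemma exists_approx_fixpoint:
  fixes F :: "(nat \<Rightarrow> real) \<Rightarrow> nat \<Rightarrow> real" and p :: nat
  assumes maps: "F ` unit_cube m \<subseteq> unit_cube m" and p: "0 < p"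
  shows "\<exists>z. approx_fixpoint F m (1 / real p) z"
proof -
  define R :: "(nat \<Rightarrow> nat) \<Rightarrow> nat \<Rightarrow> real" where
    "R y j = (if j < m then real (y j) / real p else 0)" for y j
  define near :: "(nat \<Rightarrow> nat) \<Rightarrow> (nat \<Rightarrow> nat) \<Rightarrow> bool" where
    "near q r \<longleftrightarrow> (\<forall>j<m. q j \<le> r j \<and> r j \<le> q j + 1)" for q r
  \<comment> \<open>The side condition \<open>R y i \<noteq> 1\<close> enforces Kuhn's boundary condition on the face \<open>y i = p\<close>,
    where \<open>F (R y) i \<le> R y i\<close> holds anyway.\<close>
  define label :: "(nat \<Rightarrow> nat) \<Rightarrow> nat \<Rightarrow> nat" where
    "label y i = (if R y i \<le> F (R y) i \<and> R y i \<noteq> 1 then 0 else 1)" for y i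
  have R_cube: "R y \<in> unit_cube m" if "\<forall>j<m. y j \<le> p" for y
    using that p by (auto simp: mem_unit_cube R_def)
  have F_R_cube: "F (R y) \<in> unit_cube m" if "\<forall>j<m. y j \<le> p" for y
    using maps R_cube[OF that] by blast
  obtain q where q_less: "\<forall>i<m. q i < p"
    and q_label: "\<forall>i<m. \<exists>r s. near q r \<and> near q s \<and> label r i \<noteq> label s i"
  proof (rule kuhn_lemma[OF p, of m label])
    show "\<forall>y. (\<forall>i<m. y i \<le> p) \<longrightarrow> (\<forall>i<m. y i = 0 \<longrightarrow> label y i = 0)"
      using F_R_cube by (fastforce simp: label_def R_def mem_unit_cube)
    show "\<forall>y. (\<forall>i<m. y i \<le> p) \<longrightarrow> (\<forall>i<m. y i = p \<longrightarrow> label y i = 1)"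
      using p by (auto simp: label_def R_def)
  qed (auto simp: label_def near_def)
  have near_cube: "R r \<in> unit_cube m" if "near q r" for r
    using that q_less by (intro R_cube) (metis near_def Suc_eq_plus1 Suc_leI le_trans)
  have near_close: "\<bar>R r j - R q j\<bar> \<le> 1 / real p" if "near q r" for r j
  proof (cases "j < m")
    case True
    then have "0 \<le> real (r j) - real (q j)" "real (r j) - real (q j) \<le> 1"
      using that by (auto simp: near_def)
    then show ?thesis
      using True by (simp add: R_def diff_divide_distrib[symmetric] divide_right_mono)
  qed (simp add: R_def)
  have witnesses: "\<exists>A\<in>unit_cube m. \<exists>B\<in>unit_cube m.
      (\<forall>j. \<bar>A j - R q j\<bar> \<le> 1 / real p \<and> \<bar>B j - R q j\<bar> \<le> 1 / real p) \<and> A i \<le> F A i \<and> F B i \<le> B i"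
    if "near q r" "near q s" "label r i = 0" "label s i \<noteq> 0" "i < m" for r s i
  proof (intro bexI conjI allI)
    show "R r i \<le> F (R r) i" using that(3) unfolding label_def by (metis one_neq_zero)
    have "F (R s) \<in> unit_cube m" using near_cube[OF that(2)] maps by blast
    then show "F (R s) i \<le> R s i"
      using that(4,5) unfolding label_def mem_unit_cube by (metis linorder_le_cases)
  qed (use that near_cube near_close in auto)
  have "approx_fixpoint F m (1 / real p) (R q)"
    unfolding approx_fixpoint_def
  proof (intro conjI allI impI)
    show "R q \<in> unit_cube m" using q_less by (intro R_cube) (simp add: less_imp_le)
    fix i assume i: "i < m"
    then obtain r s where "near q r" "near q s" "label r i \<noteq> label s i" using q_label by blast
    then show "\<exists>A\<in>unit_cube m. \<exists>B\<in>unit_cube m.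
        (\<forall>j. \<bar>A j - R q j\<bar> \<le> 1 / real p \<and> \<bar>B j - R q j\<bar> \<le> 1 / real p) \<and> A i \<le> F A i \<and> F B i \<le> B i"
      using witnesses[OF _ _ _ _ i] by (metis label_def)
  qed
  then show ?thesis by blast
qed

lemma fixpoint_if_limit_of_approx_fixpoints:
  fixes F :: "(nat \<Rightarrow> real) \<Rightarrow> nat \<Rightarrow> real"
  assumes cont: "continuous_on (unit_cube m) F" and maps: "F ` unit_cube m \<subseteq> unit_cube m"
    and approx: "\<And>k. approx_fixpoint F m (e k) (z k)" and e: "e \<longlonglongrightarrow> 0"
    and z: "z \<longlonglongrightarrow> l" and l: "l \<in> unit_cube m"
  shows "F l = l"
proof
  fix i
  have close_lim: "A \<longlonglongrightarrow> l" if "\<And>k j. \<bar>A k j - z k j\<bar> \<le> e k" for A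
    unfolding tendsto_fun_iff
  proof
    fix j
    have "(\<lambda>k. A k j - z k j) \<longlonglongrightarrow> 0"
      by (rule Lim_null_comparison[OF _ e]) (use that in simp)
    then show "(\<lambda>k. A k j) \<longlonglongrightarrow> l j"
      using tendsto_add[OF _ z[unfolded tendsto_fun_iff, rule_format, of j]] by fastforce
  qed
  have F_lim: "(\<lambda>k. F (A k) i) \<longlonglongrightarrow> F l i" if "A \<longlonglongrightarrow> l" "\<And>k. A k \<in> unit_cube m" for A
    using continuous_on_tendsto_compose[OF cont that(1) l] that(2) by (simp add: tendsto_fun_iff)
  show "F l i = l i"
  proof (cases "i < m")
    case True
    have "\<forall>k. \<exists>A B. A \<in> unit_cube m \<and> B \<in> unit_cube m \<and>
        (\<forall>j. \<bar>A j - z k j\<bar> \<le> e k \<and> \<bar>B j - z k j\<bar> \<le> e k) \<and> A i \<le> F A i \<and> F B i \<le> B i"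
      using approx[unfolded approx_fixpoint_def] True by blast
    then obtain A B where A: "\<And>k. A k \<in> unit_cube m" and B: "\<And>k. B k \<in> unit_cube m"
      and close: "\<And>k j. \<bar>A k j - z k j\<bar> \<le> e k \<and> \<bar>B k j - z k j\<bar> \<le> e k"
      and below: "\<And>k. A k i \<le> F (A k) i" and above: "\<And>k. F (B k) i \<le> B k i"
      by metis
    have A_lim: "A \<longlonglongrightarrow> l" and B_lim: "B \<longlonglongrightarrow> l"
      using close by (auto intro: close_lim)
    have "l i \<le> F l i"
      using LIMSEQ_le[OF A_lim[unfolded tendsto_fun_iff, rule_format] F_lim[OF A_lim A]] below by blast
    moreover have "F l i \<le> l i"
      using LIMSEQ_le[OF F_lim[OF B_lim B] B_lim[unfolded tendsto_fun_iff, rule_format]] above by blast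
    ultimately show ?thesis by simp
  next
    case False
    then show ?thesis using l maps by (force simp: mem_unit_cube)
  qed
qed

theorem brouwer_unit_cube:
  fixes F :: "(nat \<Rightarrow> real) \<Rightarrow> nat \<Rightarrow> real"
  assumes cont: "continuous_on (unit_cube m) F" and maps: "F ` unit_cube m \<subseteq> unit_cube m"
  shows "\<exists>x\<in>unit_cube m. F x = x"
proof -
  have "\<forall>k. \<exists>z. approx_fixpoint F m (1 / real (Suc k)) z"
    using exists_approx_fixpoint[OF maps zero_less_Suc] by blast
  then obtain z where z: "\<And>k. approx_fixpoint F m (1 / real (Suc k)) (z k)"
    by (metis choice)
  then have "\<forall>k. z k \<in> unit_cube m" by (simp add: approx_fixpoint_def)
  then obtain l r where l: "l \<in> unit_cube m" and r: "strict_mono r" and lim: "(z \<circ> r) \<longlonglongrightarrow> l"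
    using compact_imp_seq_compact[OF compact_unit_cube] by (metis seq_compactE)
  have "(\<lambda>k. 1 / real (Suc (r k))) \<longlonglongrightarrow> 0"
    using LIMSEQ_subseq_LIMSEQ[OF LIMSEQ_inverse_real_of_nat r] by (simp add: o_def inverse_eq_divide)
  then have "F l = l"
    using z lim l by (intro fixpoint_if_limit_of_approx_fixpoints[OF cont maps]) (auto simp: o_def)
  then show ?thesis using l by blast
qed

definition prob_simplex :: "nat \<Rightarrow> (nat \<Rightarrow> real) set" where
  "prob_simplex n = {t. (\<forall>i\<in>{1..n}. 0 \<le> t i) \<and> (\<forall>i. i \<notin> {1..n} \<longrightarrow> t i = 0) \<and> (\<Sum>i=1..n. t i) = 1}"

lemma prob_simplex_le_1:
  assumes "t \<in> prob_simplex n"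
  shows "t i \<le> 1"
proof (cases "i \<in> {1..n}")
  case True
  then have "t i \<le> (\<Sum>j=1..n. t j)"
    using assms by (intro member_le_sum) (auto simp: prob_simplex_def)
  then show ?thesis using assms by (simp add: prob_simplex_def)
qed (use assms in \<open>simp add: prob_simplex_def\<close>)

lemma prob_simplex_subset_unit_cube: "prob_simplex n \<subseteq> unit_cube (Suc n)"
  by (auto simp: mem_unit_cube prob_simplex_le_1) (auto simp: prob_simplex_def)

theorem brouwer_prob_simplex:
  fixes f :: "(nat \<Rightarrow> real) \<Rightarrow> nat \<Rightarrow> real"
  assumes n: "0 < n" and cont: "continuous_on (prob_simplex n) f"
    and maps: "f ` prob_simplex n \<subseteq> prob_simplex n"
  shows "\<exists>t\<in>prob_simplex n. f t = t"
proof -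
  define \<rho> :: "(nat \<Rightarrow> real) \<Rightarrow> nat \<Rightarrow> real" where
    "\<rho> x i = (if i \<in> {1..n}
       then x i / max 1 (\<Sum>j=1..n. x j) + max 0 (1 - (\<Sum>j=1..n. x j)) / real n else 0)" for x i
  have \<rho>_simplex: "\<rho> x \<in> prob_simplex n" if "x \<in> unit_cube (Suc n)" for x
  proof -
    define S where "S = (\<Sum>j=1..n. x j)"
    have "(\<Sum>i=1..n. \<rho> x i) = S / max 1 S + real n * (max 0 (1 - S) / real n)"
      by (simp add: \<rho>_def sum.distrib sum_divide_distrib[symmetric] S_def)
    also have "\<dots> = 1" using n by (cases "S \<le> 1") (auto simp: max_def)
    finally have "(\<Sum>i=1..n. \<rho> x i) = 1" .
    moreover have "0 \<le> \<rho> x i" if "i \<in> {1..n}" for i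
      using \<open>x \<in> unit_cube (Suc n)\<close> that by (auto simp: mem_unit_cube \<rho>_def)
    ultimately show ?thesis by (simp add: prob_simplex_def \<rho>_def)
  qed
  have \<rho>_id: "\<rho> t = t" if "t \<in> prob_simplex n" for t
    using that by (auto simp: prob_simplex_def \<rho>_def)
  have "continuous_on UNIV \<rho>"
  proof (intro continuous_on_coordinatewise_then_product)
    fix i
    show "continuous_on UNIV (\<lambda>x. \<rho> x i)"
      unfolding \<rho>_def by (cases "i \<in> {1..n}") (auto intro!: continuous_intros)
  qed
  then have "continuous_on (unit_cube (Suc n)) (f \<circ> \<rho>)"
    using \<rho>_simplex by (intro continuous_on_compose continuous_on_subset[OF cont]) (auto intro: continuous_on_subset)
  moreover have "(f \<circ> \<rho>) ` unit_cube (Suc n) \<subseteq> unit_cube (Suc n)"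
    using \<rho>_simplex maps prob_simplex_subset_unit_cube by auto
  ultimately obtain x where "x \<in> unit_cube (Suc n)" and fixed: "f (\<rho> x) = x"
    using brouwer_unit_cube by (metis comp_apply)
  then have x: "x \<in> prob_simplex n" using \<rho>_simplex maps by (metis image_subset_iff)
  with fixed show ?thesis by (auto simp: \<rho>_id[OF x])
qed

section \<open>Scarf's lemma\<close>

lemma continuous_on_Min [continuous_intros]:
  fixes f :: "'i \<Rightarrow> 'a::topological_space \<Rightarrow> 'b::linorder_topology"
  assumes "finite I" "I \<noteq> {}" "\<And>i. i \<in> I \<Longrightarrow> continuous_on S (f i)"
  shows "continuous_on S (\<lambda>x. Min ((\<lambda>i. f i x) ` I))"
  using assms
proof (induction I rule: finite_ne_induct)
  case (insert i I)
  then show ?case by (simp add: continuous_on_min)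
qed simp

lemma continuous_on_Max [continuous_intros]:
  fixes f :: "'i \<Rightarrow> 'a::topological_space \<Rightarrow> 'b::linorder_topology"
  assumes "finite I" "I \<noteq> {}" "\<And>i. i \<in> I \<Longrightarrow> continuous_on S (f i)"
  shows "continuous_on S (\<lambda>x. Max ((\<lambda>i. f i x) ` I))"
  using assms
proof (induction I rule: finite_ne_induct)
  case (insert i I)
  then show ?case by (simp add: continuous_on_max)
qed simp

text \<open>
  Only blocks whose \<open>level\<close> is within \<open>1/2\<close> of the top get positive weight, and
  \<open>adjust\<close> raises the coordinates whose share of the weight is below \<open>1/n\<close>. The large
  \<open>scale\<close> keeps every organisation with \<open>t i = 0\<close> out of the near-top blocks, which forces
  all shares to be \<open>1/n\<close> at a fixed point; as payoffs are integers, a block is weakly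
  dominated by the near-top blocks at a member minimising its level.
\<close>

locale scarf_game =
  fixes D :: "'d set" and P :: "'d \<Rightarrow> nat set" and a :: "'d \<Rightarrow> nat \<Rightarrow> nat" and n :: nat
  assumes n_pos: "0 < n"
    and finite_D: "finite D"
    and coalition: "\<And>d. d \<in> D \<Longrightarrow> P d \<noteq> {} \<and> P d \<subseteq> {1..n}"
    and singleton_block: "\<And>i. i \<in> {1..n} \<Longrightarrow> \<exists>d\<in>D. P d = {i} \<and> a d i = 0"
begin

definition payoff_bound :: real where
  "payoff_bound = real (\<Sum>d\<in>D. \<Sum>i\<in>P d. a d i) + 1"

definition scale :: real where
  "scale = real n * (payoff_bound + 1)"

definition level :: "'d \<Rightarrow> (nat \<Rightarrow> real) \<Rightarrow> real" where
  "level d t = Min ((\<lambda>i. real (a d i) + scale * t i) ` P d)"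

definition top_level :: "(nat \<Rightarrow> real) \<Rightarrow> real" where
  "top_level t = Max ((\<lambda>d. level d t) ` D)"

definition weight :: "'d \<Rightarrow> (nat \<Rightarrow> real) \<Rightarrow> real" where
  "weight d t = max 0 (1/2 - (top_level t - level d t))"

definition share :: "(nat \<Rightarrow> real) \<Rightarrow> nat \<Rightarrow> real" where
  "share t i = (\<Sum>d\<in>{d\<in>D. i \<in> P d}. weight d t / real (card (P d))) / (\<Sum>d\<in>D. weight d t)"

definition deficit :: "(nat \<Rightarrow> real) \<Rightarrow> nat \<Rightarrow> real" where
  "deficit t i = max 0 (1 / real n - share t i)"

definition adjust :: "(nat \<Rightarrow> real) \<Rightarrow> nat \<Rightarrow> real" where
  "adjust t i = (if i \<in> {1..n} then (t i + deficit t i) / (1 + (\<Sum>j=1..n. deficit t j)) else 0)"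

lemma finite_P: "d \<in> D \<Longrightarrow> finite (P d)"
  using coalition finite_subset by blast

lemma card_P_pos: "d \<in> D \<Longrightarrow> 0 < card (P d)"
  using coalition finite_P by (simp add: card_gt_0_iff)

lemma D_nonempty: "D \<noteq> {}"
  using singleton_block[of 1] n_pos by auto

lemma payoff_less_bound:
  assumes "d \<in> D" "i \<in> P d"
  shows "real (a d i) < payoff_bound"
proof -
  have "a d i \<le> (\<Sum>i\<in>P d. a d i)"
    using assms finite_P by (intro member_le_sum) auto
  also have "\<dots> \<le> (\<Sum>d\<in>D. \<Sum>i\<in>P d. a d i)"
    using assms finite_D by (intro member_le_sum) auto
  finally show ?thesis unfolding payoff_bound_def by linarith
qed

lemma level_le: "d \<in> D \<Longrightarrow> i \<in> P d \<Longrightarrow> level d t \<le> real (a d i) + scale * t i"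
  unfolding level_def using finite_P by (intro Min_le) auto

lemma level_attained: "d \<in> D \<Longrightarrow> \<exists>i\<in>P d. level d t = real (a d i) + scale * t i"
  unfolding level_def using finite_P coalition by (metis (no_types, lifting) Min_in finite_imageI image_iff image_is_empty)

lemma level_le_top: "d \<in> D \<Longrightarrow> level d t \<le> top_level t"
  unfolding top_level_def using finite_D by (intro Max_ge) auto

lemma top_attained: "\<exists>d\<in>D. level d t = top_level t"
  unfolding top_level_def using finite_D D_nonempty by (metis (no_types, lifting) Max_in finite_imageI image_iff image_is_empty)

lemma weight_nonneg: "0 \<le> weight d t"
  by (simp add: weight_def)

lemma weight_pos_imp_near_top: "0 < weight d t \<Longrightarrow> top_level t - level d t < 1/2"
  by (simp add: weight_def max_def split: if_splits)

lemma total_weight_ge_half: "1/2 \<le> (\<Sum>d\<in>D. weight d t)"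
proof -
  obtain d where d: "d \<in> D" "level d t = top_level t" using top_attained by blast
  then have "1/2 = weight d t" by (simp add: weight_def)
  also have "\<dots> \<le> (\<Sum>d\<in>D. weight d t)"
    using d finite_D weight_nonneg by (intro member_le_sum) auto
  finally show ?thesis by simp
qed

lemma sum_share: "(\<Sum>i=1..n. share t i) = 1"
proof -
  have "(\<Sum>i=1..n. \<Sum>d\<in>{d\<in>D. i \<in> P d}. weight d t / real (card (P d)))
      = (\<Sum>d\<in>D. \<Sum>i\<in>{i\<in>{1..n}. i \<in> P d}. weight d t / real (card (P d)))"
    using finite_D by (rule sum.swap_restrict[OF finite_atLeastAtMost])
  also have "\<dots> = (\<Sum>d\<in>D. weight d t)"
  proof (rule sum.cong[OF refl])
    fix d assume d: "d \<in> D"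
    then have "{i\<in>{1..n}. i \<in> P d} = P d" using coalition[OF d] by blast
    then show "(\<Sum>i\<in>{i\<in>{1..n}. i \<in> P d}. weight d t / real (card (P d))) = weight d t"
      using card_P_pos[OF d] by simp
  qed
  finally show ?thesis
    using total_weight_ge_half[of t] by (simp add: share_def sum_divide_distrib[symmetric])
qed

lemma continuous_adjust: "continuous_on UNIV adjust"
proof (intro continuous_on_coordinatewise_then_product)
  have level: "continuous_on UNIV (level d)" if "d \<in> D" for d
    unfolding level_def[abs_def] using finite_P coalition that by (intro continuous_intros) auto
  have "continuous_on UNIV top_level"
    unfolding top_level_def[abs_def] using finite_D D_nonempty level by (intro continuous_intros) auto
  then have weight: "continuous_on UNIV (weight d)" if "d \<in> D" for d
    unfolding weight_def[abs_def] using level[OF that] by (intro continuous_intros)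
  have total_nonzero: "(\<Sum>d\<in>D. weight d t) \<noteq> 0" for t
    using total_weight_ge_half[of t] by linarith
  have "continuous_on UNIV (\<lambda>t. share t i)" for i
    unfolding share_def using weight total_nonzero card_P_pos
    by (intro continuous_intros) (simp_all add: less_irrefl)
  then have deficit: "continuous_on UNIV (\<lambda>t. deficit t i)" for i
    unfolding deficit_def by (intro continuous_intros)
  fix i
  show "continuous_on UNIV (\<lambda>t. adjust t i)"
  proof (cases "i \<in> {1..n}")
    case True
    have "1 + (\<Sum>j=1..n. deficit t j) \<noteq> 0" for t
      by (smt (verit) sum_nonneg deficit_def max.cobounded1)
    then show ?thesis
      unfolding adjust_def using True deficit by (auto intro!: continuous_intros)
  qed (simp add: adjust_def del: atLeastAtMost_iff)
qed

lemma adjust_prob_simplex: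
  assumes t: "t \<in> prob_simplex n"
  shows "adjust t \<in> prob_simplex n"
proof -
  define S where "S = (\<Sum>j=1..n. deficit t j)"
  have S: "0 \<le> S" unfolding S_def deficit_def by (simp add: sum_nonneg)
  have "(\<Sum>i=1..n. adjust t i) = (\<Sum>i=1..n. (t i + deficit t i) / (1 + S))"
    by (simp add: adjust_def S_def)
  also have "\<dots> = ((\<Sum>i=1..n. t i) + S) / (1 + S)"
    by (simp add: sum_divide_distrib[symmetric] sum.distrib S_def)
  also have "\<dots> = 1" using t S by (simp add: prob_simplex_def)
  finally have "(\<Sum>i=1..n. adjust t i) = 1" .
  moreover have "0 \<le> adjust t i" for i
    using t S unfolding adjust_def S_def[symmetric] prob_simplex_def deficit_def
    by (auto intro!: divide_nonneg_nonneg add_nonneg_nonneg)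
  moreover have "adjust t i = 0" if "i \<notin> {1..n}" for i
    using that unfolding adjust_def by auto
  ultimately show ?thesis by (simp add: prob_simplex_def)
qed

lemma top_level_ge:
  assumes t: "t \<in> prob_simplex n"
  shows "payoff_bound + 1 \<le> top_level t"
proof -
  have "\<exists>k\<in>{1..n}. 1 / real n \<le> t k"
  proof (rule ccontr)
    assume "\<not> ?thesis"
    then have "(\<Sum>k=1..n. t k) < (\<Sum>k=1..n. 1 / real n)"
      using n_pos by (intro sum_strict_mono) (auto simp: not_le)
    then show False using t n_pos by (simp add: prob_simplex_def)
  qed
  then obtain k where k: "k \<in> {1..n}" "1 / real n \<le> t k" by blast
  obtain d where d: "d \<in> D" "P d = {k}" "a d k = 0" using singleton_block[OF k(1)] by blast
  have "0 \<le> payoff_bound" unfolding payoff_bound_def by (smt (verit) of_nat_0_le_iff)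
  moreover have "1 \<le> real n * t k" using k(2) n_pos by (simp add: field_simps)
  ultimately have "(payoff_bound + 1) * 1 \<le> (payoff_bound + 1) * (real n * t k)"
    by (intro mult_left_mono) auto
  then have "payoff_bound + 1 \<le> scale * t k"
    by (simp add: scale_def algebra_simps)
  also have "\<dots> = level d t" using d by (simp add: level_def)
  also have "\<dots> \<le> top_level t" using level_le_top[OF d(1)] .
  finally show ?thesis .
qed

lemma share_pos_imp_pos:
  assumes t: "t \<in> prob_simplex n" and share: "0 < share t j"
  shows "0 < t j"
proof -
  have "(\<Sum>d\<in>{d\<in>D. j \<in> P d}. weight d t / real (card (P d))) \<noteq> 0"
    using share by (auto simp: share_def)
  then obtain d where d: "d \<in> D" "j \<in> P d" and "weight d t \<noteq> 0"
    by (metis (mono_tags, lifting) div_0 mem_Collect_eq sum.neutral)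
  then have near: "top_level t - level d t < 1/2"
    using weight_nonneg by (intro weight_pos_imp_near_top) (simp add: order_less_le)
  have "0 \<le> t j" using t d coalition by (auto simp: prob_simplex_def)
  show ?thesis
  proof (rule ccontr)
    assume "\<not> 0 < t j"
    with \<open>0 \<le> t j\<close> have "t j = 0" by simp
    then have "level d t < payoff_bound"
      using level_le[OF d, of t] payoff_less_bound[OF d] by simp
    then show False using near top_level_ge[OF t] by linarith
  qed
qed

lemma fixpoint_share:
  assumes t: "t \<in> prob_simplex n" and fixed: "adjust t = t" and i: "i \<in> {1..n}"
  shows "share t i = 1 / real n"
proof -
  define S where "S = (\<Sum>j=1..n. deficit t j)"
  have S_nonneg: "0 \<le> S" unfolding S_def deficit_def by (simp add: sum_nonneg)
  have deficit_eq: "deficit t j = t j * S" if "j \<in> {1..n}" for j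
  proof -
    have "(t j + deficit t j) / (1 + S) = t j"
      using fun_cong[OF fixed, of j] that by (simp add: adjust_def S_def)
    then show ?thesis using S_nonneg by (simp add: field_simps)
  qed
  have "S = 0"
  proof (rule ccontr)
    assume "S \<noteq> 0"
    then have S_pos: "0 < S" using S_nonneg by simp
    then obtain k where k: "k \<in> {1..n}" "deficit t k \<noteq> 0"
      unfolding S_def by (metis less_irrefl sum.neutral)
    then have "share t k < 1 / real n" by (simp add: deficit_def max_def split: if_splits)
    then have "\<exists>j\<in>{1..n}. 1 / real n < share t j"
      using sum_strict_mono_ex1[of "{1..n}" "share t" "\<lambda>_. 1 / real n"] k(1) sum_share n_pos
      by (force simp: not_less)
    then obtain j where j: "j \<in> {1..n}" "1 / real n < share t j" by blast
    then have "0 < t j"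
      using share_pos_imp_pos[OF t] n_pos by (meson less_trans of_nat_0_less_iff zero_less_divide_1_iff)
    then have "0 < deficit t j" using deficit_eq[OF j(1)] S_pos by simp
    then show False using j(2) by (simp add: deficit_def)
  qed
  then have share_ge: "1 / real n \<le> share t j" if "j \<in> {1..n}" for j
    using deficit_eq[OF that] by (simp add: deficit_def)
  show ?thesis
  proof (rule ccontr)
    assume "share t i \<noteq> 1 / real n"
    then have "1 / real n < share t i" using share_ge[OF i] by simp
    then have "(\<Sum>j=1..n. 1 / real n) < (\<Sum>j=1..n. share t j)"
      using share_ge i by (intro sum_strict_mono_ex1) auto
    then show False using sum_share n_pos by simp
  qed
qed

lemma weight_support_dominates:
  assumes d': "d' \<in> D"
  shows "\<exists>i\<in>P d'. \<forall>d\<in>D. 0 < weight d t \<and> i \<in> P d \<longrightarrow> a d' i \<le> a d i"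
proof -
  obtain i where i: "i \<in> P d'" "level d' t = real (a d' i) + scale * t i"
    using level_attained[OF d'] by blast
  show ?thesis
  proof (intro bexI[OF _ i(1)] ballI impI)
    fix d assume d: "d \<in> D" and "0 < weight d t \<and> i \<in> P d"
    then have "top_level t - level d t < 1/2" "i \<in> P d"
      using weight_pos_imp_near_top by auto
    then have "real (a d' i) < real (a d i) + 1"
      using level_le[OF d, of i t] level_le_top[OF d', of t] i(2) by linarith
    then show "a d' i \<le> a d i" by linarith
  qed
qed

end

theorem exists_dominating_balanced_weights:
  fixes D :: "'d set" and P :: "'d \<Rightarrow> nat set" and a :: "'d \<Rightarrow> nat \<Rightarrow> nat"
  assumes finite_D: "finite D" and coalition: "\<And>d. d \<in> D \<Longrightarrow> P d \<noteq> {} \<and> P d \<subseteq> {1..n}"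
    and singleton_block: "\<And>i. i \<in> {1..n} \<Longrightarrow> \<exists>d\<in>D. P d = {i} \<and> a d i = 0"
  shows "\<exists>\<mu> :: 'd \<Rightarrow> real. (\<forall>d\<in>D. 0 \<le> \<mu> d) \<and> (\<forall>i\<in>{1..n}. (\<Sum>d\<in>{d\<in>D. i \<in> P d}. \<mu> d) = 1) \<and>
           (\<forall>d'\<in>D. \<exists>i\<in>P d'. \<forall>d\<in>D. 0 < \<mu> d \<and> i \<in> P d \<longrightarrow> a d' i \<le> a d i)"
proof (cases "n = 0")
  case True
  then have "D = {}" using coalition by fastforce
  then show ?thesis using True by auto
next
  case False
  then interpret scarf_game D P a n
    using assms by unfold_locales auto
  obtain t where t: "t \<in> prob_simplex n" and fixed: "adjust t = t"
    using brouwer_prob_simplex[of n adjust] n_pos continuous_on_subset[OF continuous_adjust]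
      adjust_prob_simplex by blast
  define W where "W = (\<Sum>d\<in>D. weight d t)"
  have W_pos: "0 < W" using total_weight_ge_half[of t] by (simp add: W_def)
  define \<mu> where "\<mu> d = real n / W * (weight d t / real (card (P d)))" for d
  show ?thesis
  proof (intro exI[of _ \<mu>] conjI ballI)
    fix d assume "d \<in> D"
    show "0 \<le> \<mu> d" using W_pos weight_nonneg by (simp add: \<mu>_def)
  next
    fix i assume i: "i \<in> {1..n}"
    have "(\<Sum>d\<in>{d\<in>D. i \<in> P d}. \<mu> d) = real n * share t i"
      unfolding \<mu>_def sum_distrib_left[symmetric] by (simp add: share_def W_def)
    also have "\<dots> = 1" using fixpoint_share[OF t fixed i] n_pos by simp
    finally show "(\<Sum>d\<in>{d\<in>D. i \<in> P d}. \<mu> d) = 1" .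
  next
    fix d' assume "d' \<in> D"
    then obtain i where "i \<in> P d'" "\<forall>d\<in>D. 0 < weight d t \<and> i \<in> P d \<longrightarrow> a d' i \<le> a d i"
      using weight_support_dominates[of d' t] by blast
    moreover have "0 < weight d t" if "0 < \<mu> d" for d
    proof (rule ccontr)
      assume "\<not> 0 < weight d t"
      then have "weight d t = 0" using weight_nonneg[of d t] by simp
      then show False using that by (simp add: \<mu>_def)
    qed
    ultimately show "\<exists>i\<in>P d'. \<forall>d\<in>D. 0 < \<mu> d \<and> i \<in> P d \<longrightarrow> a d' i \<le> a d i"
      by (intro bexI[of _ i]) auto
  qed
qed

section \<open>Balanced families of exchanges\<close>

lemma cycles_mono: "A \<subseteq> B \<Longrightarrow> cycles A k \<subseteq> cycles B k"
  unfolding cycles_def is_cycle_def by blast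

lemma cycle_subset_arcs: "c \<in> cycles A k \<Longrightarrow> c \<subseteq> A"
  unfolding cycles_def is_cycle_def by blast

lemma finite_cycles: "finite A \<Longrightarrow> finite (cycles A k)"
  by (rule finite_subset[of _ "Pow A"]) (use cycle_subset_arcs in auto)

lemma verts_cycle_nonempty: "c \<in> cycles A k \<Longrightarrow> verts c \<noteq> {}"
  unfolding cycles_def is_cycle_def verts_def by fastforce

lemma exchange_subset_cycles: "is_exchange A W k X \<Longrightarrow> X \<subseteq> cycles A k"
  unfolding is_exchange_def using cycles_mono[of "A \<inter> W \<times> W" A k] by blast

lemma verts_exchange_subset: "is_exchange A W k X \<Longrightarrow> c \<in> X \<Longrightarrow> verts c \<subseteq> W"
  unfolding is_exchange_def verts_def using cycle_subset_arcs by fastforce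

lemma card_exchange_cycles_through_le_1:
  assumes "is_exchange A W k X"
  shows "card {c\<in>X. v \<in> verts c} \<le> 1"
proof (cases "finite {c\<in>X. v \<in> verts c}")
  case True
  then show ?thesis
    using assms unfolding is_exchange_def One_nat_def by (subst card_le_Suc0_iff_eq) blast+
qed simp

lemma util_eq_sum_gamma:
  assumes "finite A" "is_exchange A W k X"
  shows "util U X = (\<Sum>c\<in>X. gamma U c)"
proof -
  have X: "X \<subseteq> cycles A k" using exchange_subset_cycles[OF assms(2)] .
  then have "finite X" by (rule finite_subset[OF _ finite_cycles[OF assms(1)]])
  moreover have "\<forall>c\<in>X. finite (U \<inter> verts c)"
  proof
    fix c assume "c \<in> X"
    then have "finite c" using X cycle_subset_arcs assms(1) by (meson finite_subset subsetD)
    then show "finite (U \<inter> verts c)" by (simp add: verts_def)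
  qed
  moreover have "\<forall>c\<in>X. \<forall>c'\<in>X. c \<noteq> c' \<longrightarrow> (U \<inter> verts c) \<inter> (U \<inter> verts c') = {}"
    using assms(2) unfolding is_exchange_def by blast
  ultimately have "card (\<Union>c\<in>X. U \<inter> verts c) = (\<Sum>c\<in>X. card (U \<inter> verts c))"
    by (rule card_UN_disjoint)
  moreover have "U \<inter> (\<Union>c\<in>X. verts c) = (\<Union>c\<in>X. U \<inter> verts c)" by blast
  ultimately show ?thesis unfolding util_def gamma_def by metis
qed

definition exchange_blocks ::
    "('v \<times> 'v) set \<Rightarrow> (nat \<Rightarrow> 'v set) \<Rightarrow> nat \<Rightarrow> nat \<Rightarrow> (nat set \<times> ('v \<times> 'v) set set) set" where
  "exchange_blocks E Vs n \<Delta> = {(P, X). P \<subseteq> {1..n} \<and> P \<noteq> {} \<and> is_exchange E (\<Union>i\<in>P. Vs i) \<Delta> X}"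

lemma finite_exchange_blocks:
  assumes "finite E"
  shows "finite (exchange_blocks E Vs n \<Delta>)"
proof (rule finite_subset)
  show "exchange_blocks E Vs n \<Delta> \<subseteq> Pow {1..n} \<times> Pow (cycles E \<Delta>)"
    unfolding exchange_blocks_def using exchange_subset_cycles by fastforce
  show "finite (Pow {1..n} \<times> Pow (cycles E \<Delta>))"
    using finite_cycles[OF assms] by simp
qed

locale balanced_exchanges =
  fixes E :: "('v \<times> 'v) set" and Vs :: "nat \<Rightarrow> 'v set" and n \<Delta> :: nat
    and D :: "'d set" and P :: "'d \<Rightarrow> nat set" and X :: "'d \<Rightarrow> ('v \<times> 'v) set set"
    and \<mu> :: "'d \<Rightarrow> real"
  assumes finite_E: "finite E"
    and arcs: "E \<subseteq> (\<Union>i\<in>{1..n}. Vs i) \<times> (\<Union>i\<in>{1..n}. Vs i)"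
    and disjoint: "\<And>i j. i \<in> {1..n} \<Longrightarrow> j \<in> {1..n} \<Longrightarrow> i \<noteq> j \<Longrightarrow> Vs i \<inter> Vs j = {}"
    and finite_D: "finite D"
    and coalition: "\<And>d. d \<in> D \<Longrightarrow> P d \<subseteq> {1..n}"
    and exchange: "\<And>d. d \<in> D \<Longrightarrow> is_exchange E (\<Union>i\<in>P d. Vs i) \<Delta> (X d)"
    and nonneg: "\<And>d. d \<in> D \<Longrightarrow> 0 \<le> \<mu> d"
    and balanced: "\<And>i. i \<in> {1..n} \<Longrightarrow> (\<Sum>d\<in>{d\<in>D. i \<in> P d}. \<mu> d) = 1"
begin

definition aggregate :: "('v \<times> 'v) set \<Rightarrow> real" where
  "aggregate c = (\<Sum>d\<in>{d\<in>D. c \<in> X d}. \<mu> d)"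

lemma exchange_subset_cycles_E: "d \<in> D \<Longrightarrow> X d \<subseteq> cycles E \<Delta>"
  using exchange exchange_subset_cycles by blast

lemma aggregate_nonneg: "0 \<le> aggregate c"
  unfolding aggregate_def using nonneg by (intro sum_nonneg) auto

lemma member_coalition_if_covered:
  assumes "d \<in> D" "c \<in> X d" "v \<in> verts c" "v \<in> Vs i" "i \<in> {1..n}"
  shows "i \<in> P d"
proof -
  have "v \<in> (\<Union>i\<in>P d. Vs i)" using verts_exchange_subset[OF exchange] assms by blast
  then obtain j where "j \<in> P d" "v \<in> Vs j" by blast
  with assms coalition disjoint show ?thesis by blast
qed

lemma aggregate_through_vertex_le_1:
  assumes v: "v \<in> Vs i" and i: "i \<in> {1..n}"
  shows "(\<Sum>c\<in>{c\<in>cycles E \<Delta>. v \<in> verts c}. aggregate c) \<le> 1"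
proof -
  let ?C = "{c\<in>cycles E \<Delta>. v \<in> verts c}"
  have "(\<Sum>c\<in>?C. aggregate c) = (\<Sum>d\<in>D. \<Sum>c\<in>{c\<in>?C. c \<in> X d}. \<mu> d)"
    unfolding aggregate_def using finite_D finite_cycles[OF finite_E]
    by (intro sum.swap_restrict) auto
  also have "\<dots> \<le> (\<Sum>d\<in>D. if i \<in> P d then \<mu> d else 0)"
  proof (rule sum_mono)
    fix d assume d: "d \<in> D"
    have "{c\<in>?C. c \<in> X d} = {c\<in>X d. v \<in> verts c}"
      using exchange_subset_cycles_E[OF d] by blast
    then have card: "real (card {c\<in>?C. c \<in> X d}) \<le> 1"
      using card_exchange_cycles_through_le_1[OF exchange[OF d]] by simp
    show "(\<Sum>c\<in>{c\<in>?C. c \<in> X d}. \<mu> d) \<le> (if i \<in> P d then \<mu> d else 0)"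
    proof (cases "{c\<in>?C. c \<in> X d} = {}")
      case True
      then show ?thesis using nonneg[OF d] by (simp only: sum.empty) simp
    next
      case False
      then have "i \<in> P d" using member_coalition_if_covered[OF d _ _ v i] by blast
      then show ?thesis
        using mult_left_le_one_le[OF nonneg[OF d] _ card] by simp
    qed
  qed
  also have "\<dots> = 1"
    using balanced[OF i] finite_D by (simp add: sum.inter_filter)
  finally show ?thesis .
qed

lemma fractional_exchange_aggregate: "fractional_exchange E (\<Union>i\<in>{1..n}. Vs i) \<Delta> aggregate"
  unfolding fractional_exchange_def
proof (intro conjI ballI)
  fix c assume c: "c \<in> cycles E \<Delta>"
  show "0 \<le> aggregate c" by (rule aggregate_nonneg)
  obtain v where v: "v \<in> verts c" using verts_cycle_nonempty[OF c] by blast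
  then obtain w where "(v, w) \<in> E" using cycle_subset_arcs[OF c] unfolding verts_def by force
  then obtain i where i: "i \<in> {1..n}" "v \<in> Vs i" using arcs by blast
  have "aggregate c \<le> (\<Sum>c\<in>{c\<in>cycles E \<Delta>. v \<in> verts c}. aggregate c)"
    using c v finite_cycles[OF finite_E] aggregate_nonneg by (intro member_le_sum) auto
  also have "\<dots> \<le> 1" using aggregate_through_vertex_le_1[OF i(2,1)] .
  finally show "aggregate c \<le> 1" .
next
  fix v assume "v \<in> (\<Union>i\<in>{1..n}. Vs i)"
  then show "(\<Sum>c\<in>{c\<in>cycles E \<Delta>. v \<in> verts c}. aggregate c) \<le> 1"
    using aggregate_through_vertex_le_1 by blast
qed

lemma sum_gamma_aggregate:
  "(\<Sum>c\<in>cycles E \<Delta>. real (gamma U c) * aggregate c) = (\<Sum>d\<in>D. \<mu> d * real (util U (X d)))"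
proof -
  have "(\<Sum>c\<in>cycles E \<Delta>. real (gamma U c) * aggregate c)
      = (\<Sum>c\<in>cycles E \<Delta>. \<Sum>d\<in>{d\<in>D. c \<in> X d}. real (gamma U c) * \<mu> d)"
    by (simp add: aggregate_def sum_distrib_left)
  also have "\<dots> = (\<Sum>d\<in>D. \<Sum>c\<in>{c\<in>cycles E \<Delta>. c \<in> X d}. real (gamma U c) * \<mu> d)"
    using finite_D finite_cycles[OF finite_E] by (intro sum.swap_restrict) auto
  also have "\<dots> = (\<Sum>d\<in>D. \<mu> d * real (util U (X d)))"
  proof (rule sum.cong[OF refl])
    fix d assume d: "d \<in> D"
    have "{c\<in>cycles E \<Delta>. c \<in> X d} = X d" using exchange_subset_cycles_E[OF d] by blast
    then show "(\<Sum>c\<in>{c\<in>cycles E \<Delta>. c \<in> X d}. real (gamma U c) * \<mu> d) = \<mu> d * real (util U (X d))"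
      by (simp add: util_eq_sum_gamma[OF finite_E exchange[OF d]] sum_distrib_left mult.commute)
  qed
  finally show ?thesis .
qed

lemma util_le_sum_gamma_aggregate:
  assumes i: "i \<in> {1..n}" and dominated: "\<And>d. d \<in> D \<Longrightarrow> 0 < \<mu> d \<Longrightarrow> i \<in> P d \<Longrightarrow> u \<le> util U (X d)"
  shows "real u \<le> (\<Sum>c\<in>cycles E \<Delta>. real (gamma U c) * aggregate c)"
proof -
  have "real u = (\<Sum>d\<in>{d\<in>D. i \<in> P d}. \<mu> d * real u)"
    using balanced[OF i] by (simp add: sum_distrib_right[symmetric])
  also have "\<dots> \<le> (\<Sum>d\<in>{d\<in>D. i \<in> P d}. \<mu> d * real (util U (X d)))"
  proof (rule sum_mono)
    fix d assume d: "d \<in> {d\<in>D. i \<in> P d}"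
    show "\<mu> d * real u \<le> \<mu> d * real (util U (X d))"
    proof (cases "\<mu> d = 0")
      case False
      then have "0 < \<mu> d" using nonneg d by (simp add: order_less_le)
      then show ?thesis using dominated d by simp
    qed simp
  qed
  also have "\<dots> \<le> (\<Sum>d\<in>D. \<mu> d * real (util U (X d)))"
    using finite_D nonneg by (intro sum_mono2) auto
  also have "\<dots> = (\<Sum>c\<in>cycles E \<Delta>. real (gamma U c) * aggregate c)"
    by (rule sum_gamma_aggregate[symmetric])
  finally show ?thesis .
qed

end

lemma in_supp_core_if_floor_bound:
  fixes b :: "nat \<Rightarrow> real"
  assumes deviation: "\<And>P X'. P \<subseteq> {1..n} \<Longrightarrow> P \<noteq> {} \<Longrightarrow> is_exchange E (\<Union>i\<in>P. Vs i) \<Delta> X'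
      \<Longrightarrow> \<exists>i\<in>P. real (util (Us i) X') \<le> b i"
    and floor: "\<forall>i\<in>{1..n}. \<lfloor>b i\<rfloor> \<le> int (util (Us i) X)"
  shows "in_supp_core E Vs Us n \<Delta> X"
  unfolding in_supp_core_def blocks_def
proof clarify
  fix P X' assume P: "P \<subseteq> {1..n}" "P \<noteq> {}" and X': "is_exchange E (\<Union>i\<in>P. Vs i) \<Delta> X'"
    and better: "\<forall>i\<in>P. util (Us i) X < util (Us i) X'"
  obtain i where i: "i \<in> P" "real (util (Us i) X') \<le> b i" using deviation[OF P X'] by blast
  then have "int (util (Us i) X') \<le> \<lfloor>b i\<rfloor>" by (simp add: le_floor_iff)
  also have "\<dots> \<le> int (util (Us i) X)" using floor i P by blast
  finally show False using better i(1) by fastforce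
qed

theorem mainTheorem1:
  fixes E :: "('v \<times> 'v) set" and n :: nat and Vs Us :: "nat \<Rightarrow> 'v set" and \<Delta> :: nat
  assumes fin: "\<forall>i\<in>{1..n}. finite (Vs i)"
    and disj: "\<forall>i\<in>{1..n}. \<forall>j\<in>{1..n}. i \<noteq> j \<longrightarrow> Vs i \<inter> Vs j = {}"
    and pat: "\<forall>i\<in>{1..n}. Us i \<subseteq> Vs i"
    and arcs: "E \<subseteq> (\<Union>i\<in>{1..n}. Vs i) \<times> (\<Union>i\<in>{1..n}. Vs i)"
    and noloop: "\<forall>v. (v, v) \<notin> E"
    and bound: "\<Delta> \<ge> 2"
  shows "\<exists>y. fractional_exchange E (\<Union>i\<in>{1..n}. Vs i) \<Delta> y \<and>
    (\<forall>V0 E' X. finite V0 \<and> V0 \<inter> (\<Union>i\<in>{1..n}. Vs i) = {} \<and>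
       extended_graph E (\<Union>i\<in>{1..n}. Vs i) V0 E' \<and>
       is_exchange E' ((\<Union>i\<in>{1..n}. Vs i) \<union> V0) \<Delta> X \<and>
       (\<forall>i\<in>{1..n}. int (util (Us i) X) \<ge> \<lfloor>\<Sum>c\<in>cycles E \<Delta>. real (gamma (Us i) c) * y c\<rfloor>)
       \<longrightarrow> in_supp_core E Vs Us n \<Delta> X)"
proof -
  \<comment> \<open>Blocking coalitions may only use exchanges of \<open>E\<close>.\<close>
  have finite_E: "finite E"
    using fin by (intro finite_subset[OF arcs]) auto
  define D where "D = exchange_blocks E Vs n \<Delta>"
  have finite_D: "finite D" unfolding D_def by (rule finite_exchange_blocks[OF finite_E])
  have coalition: "fst d \<noteq> {} \<and> fst d \<subseteq> {1..n}" if "d \<in> D" for d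
    using that by (auto simp: D_def exchange_blocks_def)
  have exchange: "is_exchange E (\<Union>i\<in>fst d. Vs i) \<Delta> (snd d)" if "d \<in> D" for d
    using that by (auto simp: D_def exchange_blocks_def)
  have singleton: "\<exists>d\<in>D. fst d = {i} \<and> util (Us i) (snd d) = 0" if "i \<in> {1..n}" for i
    using that by (intro bexI[of _ "({i}, {})"]) (auto simp: D_def exchange_blocks_def is_exchange_def util_def)
  obtain \<mu> :: "_ \<Rightarrow> real" where nonneg: "\<forall>d\<in>D. 0 \<le> \<mu> d"
    and balanced: "\<forall>i\<in>{1..n}. (\<Sum>d\<in>{d\<in>D. i \<in> fst d}. \<mu> d) = 1"
    and dominating: "\<forall>d'\<in>D. \<exists>i\<in>fst d'. \<forall>d\<in>D. 0 < \<mu> d \<and> i \<in> fst d \<longrightarrow>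
                       util (Us i) (snd d') \<le> util (Us i) (snd d)"
    using exists_dominating_balanced_weights[OF finite_D coalition singleton] by blast
  interpret balanced_exchanges E Vs n \<Delta> D fst snd \<mu>
    using finite_E arcs disj finite_D coalition exchange nonneg balanced by unfold_locales auto
  have deviation: "\<exists>i\<in>P. real (util (Us i) X') \<le> (\<Sum>c\<in>cycles E \<Delta>. real (gamma (Us i) c) * aggregate c)"
    if "P \<subseteq> {1..n}" "P \<noteq> {}" "is_exchange E (\<Union>i\<in>P. Vs i) \<Delta> X'" for P X'
  proof -
    have "(P, X') \<in> D" using that by (simp add: D_def exchange_blocks_def)
    then obtain i where i: "i \<in> P"
      and dominated: "\<And>d. d \<in> D \<Longrightarrow> 0 < \<mu> d \<Longrightarrow> i \<in> fst d \<Longrightarrow> util (Us i) X' \<le> util (Us i) (snd d)"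
      using dominating by fastforce
    have "i \<in> {1..n}" using i that(1) by blast
    then show ?thesis using i util_le_sum_gamma_aggregate[OF _ dominated] by blast
  qed
  show ?thesis
    using fractional_exchange_aggregate in_supp_core_if_floor_bound[OF deviation] by blast
qed

end
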